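(* Let $X$ be a Fréchet space and let $\Gamma:[0,1]\to ck(X)$ be Bochner measurable. Then there is a set $N\subseteq[0,1]$ with $\mu(N)=0$ such that $\bigcup_{t\in[0,1]\setminus N}\Gamma(t)$ is a separable subset of $X$.
   Context: $X$ is a Fréchet space with topology generated by an increasing sufficient sequence of seminorms $(p_i)$ and translation-invariant metric $d(x,y)=\sum_{i\ge1}2^{-i}\frac{p_i(x-y)}{1+p_i(x-y)}$. $cb(X)$ (resp. $ck(X)$) is the family of nonempty closed bounded convex (resp. compact convex) subsets of $X$; $H$ is the Hausdorff metric on $cb(X)$ induced by $d$. $\mu$ is Lebesgue measure on $[0,1]$. A simple multifunction is $\sum_{j=1}^p\chi_{A_j}C_j$ with $A_j$ pairwise disjoint Lebesgue measurable sets and $C_j\in cb(X)$. $\Gamma$ is Bochner measurable if there are simple multifunctions $\Gamma_n$ with $H(\Gamma_n(t),\Gamma(t))\to0$ for a.e. $t\in[0,1]$. *)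

theory Defs
  imports "HOL-Analysis.Analysis"
begin

definition is_seminorm :: "('a::real_vector \<Rightarrow> real) \<Rightarrow> bool" where
  "is_seminorm q \<longleftrightarrow> (\<forall>x y. q (x + y) \<le> q x + q y) \<and> (\<forall>c x. q (c *\<^sub>R x) = \<bar>c\<bar> * q x)"

text \<open>The translation-invariant metric d(x,y) = sum_{i>=1} 2^{-i} p_i(x-y)/(1+p_i(x-y));
  the seminorm p_i of the paper is \<open>p (i-1)\<close> here (indices start at 0).\<close>
definition fdist :: "(nat \<Rightarrow> 'a::real_vector \<Rightarrow> real) \<Rightarrow> 'a \<Rightarrow> 'a \<Rightarrow> real" where
  "fdist p x y = (\<Sum>i. (1/2) ^ Suc i * (p i (x - y) / (1 + p i (x - y))))"

definition fr_topology :: "(nat \<Rightarrow> 'a::real_vector \<Rightarrow> real) \<Rightarrow> 'a topology" where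
  "fr_topology p = topology (\<lambda>U. \<forall>x\<in>U. \<exists>i \<epsilon>. \<epsilon> > 0 \<and> {y. p i (y - x) < \<epsilon>} \<subseteq> U)"

definition frechet_seminorms :: "(nat \<Rightarrow> 'a::real_vector \<Rightarrow> real) \<Rightarrow> bool" where
  "frechet_seminorms p \<longleftrightarrow>
     (\<forall>i. is_seminorm (p i)) \<and>
     (\<forall>i x. p i x \<le> p (Suc i) x) \<and>
     (\<forall>x. (\<forall>i. p i x = 0) \<longrightarrow> x = 0) \<and>
     (\<forall>s::nat \<Rightarrow> 'a. (\<forall>e>0. \<exists>N. \<forall>m\<ge>N. \<forall>n\<ge>N. fdist p (s m) (s n) < e)
        \<longrightarrow> (\<exists>l. (\<lambda>n. fdist p (s n) l) \<longlonglongrightarrow> 0))"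

definition fr_bounded :: "(nat \<Rightarrow> 'a::real_vector \<Rightarrow> real) \<Rightarrow> 'a set \<Rightarrow> bool" where
  "fr_bounded p C \<longleftrightarrow> (\<forall>i. \<exists>M. \<forall>x\<in>C. p i x \<le> M)"

definition cb :: "(nat \<Rightarrow> 'a::real_vector \<Rightarrow> real) \<Rightarrow> 'a set set" where
  "cb p = {C. C \<noteq> {} \<and> closedin (fr_topology p) C \<and> fr_bounded p C \<and> convex C}"

definition ck :: "(nat \<Rightarrow> 'a::real_vector \<Rightarrow> real) \<Rightarrow> 'a set set" where
  "ck p = {C. C \<noteq> {} \<and> compactin (fr_topology p) C \<and> convex C}"

definition fhaus :: "(nat \<Rightarrow> 'a::real_vector \<Rightarrow> real) \<Rightarrow> 'a set \<Rightarrow> 'a set \<Rightarrow> real" where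
  "fhaus p A B = max (SUP a\<in>A. INF b\<in>B. fdist p a b) (SUP b\<in>B. INF a\<in>A. fdist p a b)"

text \<open>Simple multifunction \<open>\<Sum>j \<chi>_{A_j} C_j\<close> on [0,1]: value C_j on A_j and {0}
  (the empty Minkowski sum) outside all A_j.\<close>
definition simple_multifunction ::
  "(nat \<Rightarrow> 'a::real_vector \<Rightarrow> real) \<Rightarrow> (real \<Rightarrow> 'a set) \<Rightarrow> bool" where
  "simple_multifunction p G \<longleftrightarrow>
     (\<exists>(m::nat) (A :: nat \<Rightarrow> real set) (C :: nat \<Rightarrow> 'a set).
        (\<forall>j<m. A j \<in> sets lebesgue \<and> C j \<in> cb p) \<and>
        (\<forall>j<m. \<forall>k<m. j \<noteq> k \<longrightarrow> A j \<inter> A k = {}) \<and>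
        (\<forall>t\<in>{0..1}. G t = (if \<exists>j<m. t \<in> A j then C (THE j. j < m \<and> t \<in> A j) else {0})))"

definition bochner_measurable_mf ::
  "(nat \<Rightarrow> 'a::real_vector \<Rightarrow> real) \<Rightarrow> (real \<Rightarrow> 'a set) \<Rightarrow> bool" where
  "bochner_measurable_mf p \<Gamma> \<longleftrightarrow>
     (\<exists>G :: nat \<Rightarrow> real \<Rightarrow> 'a set. (\<forall>n. simple_multifunction p (G n)) \<and>
        (AE t in lebesgue. t \<in> {0..1} \<longrightarrow> (\<lambda>n. fhaus p (G n t) (\<Gamma> t)) \<longlonglongrightarrow> 0))"

definition fr_separable :: "(nat \<Rightarrow> 'a::real_vector \<Rightarrow> real) \<Rightarrow> 'a set \<Rightarrow> bool" where
  "fr_separable p S \<longleftrightarrow>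
     (\<exists>D. countable D \<and> D \<subseteq> S \<and> S \<subseteq> (fr_topology p) closure_of D)"

end

theory Submission
  imports Defs
begin

text \<open>
  The metric d is a genuine metric inducing the seminorm topology, so each compact \<open>\<Gamma>(t)\<close> is
  totally bounded and hence separable. Off a null set, \<open>\<Gamma>(t)\<close> is a Hausdorff limit of values of
  the simple approximants; these values form a countable family \<open>\<S>\<close>. For every \<open>S \<in> \<S>\<close> and
  every n choose one good t with S within 1/(n+1) of \<open>\<Gamma>(t)\<close>. Any \<open>\<Gamma>(t)\<close> is close to some S,
  which is close to one of these countably many chosen sets, so the union of their countable dense
  subsets is dense in the whole union.
\<close>

lemma countable_witnesses:
  assumes "countable J"
  shows "\<exists>T. countable T \<and> T \<subseteq> {t. \<exists>j\<in>J. Q j t} \<and> (\<forall>j\<in>J. (\<exists>t. Q j t) \<longrightarrow> (\<exists>t\<in>T. Q j t))"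
proof (intro exI conjI)
  let ?T = "(\<lambda>j. SOME t. Q j t) ` {j\<in>J. \<exists>t. Q j t}"
  show "countable ?T" using assms by simp
  show "?T \<subseteq> {t. \<exists>j\<in>J. Q j t}" by (auto intro: someI_ex)
  show "\<forall>j\<in>J. (\<exists>t. Q j t) \<longrightarrow> (\<exists>t\<in>?T. Q j t)" by (auto intro: someI_ex)
qed

context Metric_space
begin

lemma mtotally_bounded_imp_countable_dense:
  assumes "mtotally_bounded S"
  shows "\<exists>D. countable D \<and> D \<subseteq> S \<and> S \<subseteq> mtopology closure_of D"
proof -
  have "\<forall>n::nat. \<exists>K. finite K \<and> K \<subseteq> S \<and> S \<subseteq> (\<Union>x\<in>K. mball x (1 / Suc n))"
    using assms unfolding mtotally_bounded_def by simp
  then obtain K where K: "\<And>n. finite (K n)" "\<And>n. K n \<subseteq> S"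
    "\<And>n::nat. S \<subseteq> (\<Union>x\<in>K n. mball x (1 / Suc n))"
    by metis
  have "x \<in> mtopology closure_of (\<Union>n. K n)" if "x \<in> S" for x
    unfolding metric_closure_of
  proof (intro CollectI conjI allI impI)
    show "x \<in> M" using that mtotally_bounded_imp_subset[OF assms] by blast
    fix r :: real assume "0 < r"
    then obtain n where "1 / Suc n < r" using nat_approx_posE by blast
    moreover obtain y where "y \<in> K n" "x \<in> mball y (1 / Suc n)" using K(3) \<open>x \<in> S\<close> by blast
    ultimately have "y \<in> mball x r" using commute[of x y] by auto
    then show "\<exists>y\<in>\<Union>n. K n. y \<in> mball x r" using \<open>y \<in> K n\<close> by blast
  qed
  moreover have "countable (\<Union>n. K n)" using K(1) by (simp add: countable_finite)
  ultimately show ?thesis using K(2) by blast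
qed

lemma countable_dense_Union_of_approximable:
  assumes "countable \<S>" and "\<And>S. S \<in> \<S> \<Longrightarrow> S \<subseteq> M"
    and separable: "\<And>t. t \<in> I \<Longrightarrow> \<exists>D. countable D \<and> D \<subseteq> \<Gamma> t \<and> \<Gamma> t \<subseteq> mtopology closure_of D"
    and approx: "\<And>t e. t \<in> I \<Longrightarrow> 0 < e \<Longrightarrow>
      \<exists>S\<in>\<S>. (\<forall>x\<in>\<Gamma> t. \<exists>y\<in>S. d x y < e) \<and> (\<forall>y\<in>S. \<exists>z\<in>\<Gamma> t. d y z < e)"
  shows "\<exists>D. countable D \<and> D \<subseteq> (\<Union>t\<in>I. \<Gamma> t) \<and> (\<Union>t\<in>I. \<Gamma> t) \<subseteq> mtopology closure_of D"
proof -
  define near where "near S n t \<longleftrightarrow> t \<in> I \<and> (\<forall>y\<in>S. \<exists>z\<in>\<Gamma> t. d y z < 1 / Suc n)"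
    for S n t
  obtain T where "countable T" and T_witness: "T \<subseteq> {t. \<exists>j\<in>\<S> \<times> UNIV. near (fst j) (snd j) t}"
    and T_near: "\<And>S n. S \<in> \<S> \<Longrightarrow> \<exists>t. near S n t \<Longrightarrow> \<exists>t\<in>T. near S n t"
    using countable_witnesses[of "\<S> \<times> UNIV" "\<lambda>j. near (fst j) (snd j)"] \<open>countable \<S>\<close> by auto
  have T_sub: "T \<subseteq> I" using T_witness by (auto simp: near_def)
  obtain Dt where Dt: "\<And>t. t \<in> I \<Longrightarrow> countable (Dt t) \<and> Dt t \<subseteq> \<Gamma> t \<and> \<Gamma> t \<subseteq> mtopology closure_of (Dt t)"
    using separable by metis
  have \<Gamma>_sub: "\<Gamma> t \<subseteq> M" if "t \<in> I" for t
    using Dt[OF that] closure_of_subset_topspace by fastforce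
  define D where "D = (\<Union>t\<in>T. Dt t)"
  have "\<Gamma> t \<subseteq> mtopology closure_of D" if "t \<in> T" for t
  proof -
    have "mtopology closure_of (Dt t) \<subseteq> mtopology closure_of D"
      using that unfolding D_def by (intro closure_of_mono) blast
    then show ?thesis using Dt[of t] T_sub that by blast
  qed
  then have closure_T: "mtopology closure_of (\<Union>t\<in>T. \<Gamma> t) \<subseteq> mtopology closure_of D"
    by (metis UN_least closure_of_closure_of closure_of_mono)
  have "x \<in> mtopology closure_of (\<Union>t\<in>T. \<Gamma> t)" if "t \<in> I" "x \<in> \<Gamma> t" for t x
    unfolding metric_closure_of
  proof (intro CollectI conjI allI impI)
    show "x \<in> M" using \<Gamma>_sub that by blast
    fix r :: real assume "0 < r"
    then obtain n where n: "1 / Suc n < r / 2" using nat_approx_posE[of "r / 2"] by auto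
    obtain S where "S \<in> \<S>" and S: "\<forall>x\<in>\<Gamma> t. \<exists>y\<in>S. d x y < 1 / Suc n"
      "\<forall>y\<in>S. \<exists>z\<in>\<Gamma> t. d y z < 1 / Suc n"
      using approx[OF \<open>t \<in> I\<close>, of "1 / Suc n"] by auto
    obtain y where "y \<in> S" and xy: "d x y < 1 / Suc n" using S(1) \<open>x \<in> \<Gamma> t\<close> by blast
    obtain t' where "t' \<in> T" and "near S n t'"
      using T_near \<open>S \<in> \<S>\<close> S(2) \<open>t \<in> I\<close> unfolding near_def by fastforce
    then obtain z where "z \<in> \<Gamma> t'" and yz: "d y z < 1 / Suc n"
      using \<open>y \<in> S\<close> by (auto simp: near_def)
    have "x \<in> M" "y \<in> M" "z \<in> M"
      using \<Gamma>_sub T_sub that \<open>y \<in> S\<close> \<open>S \<in> \<S>\<close> assms(2) \<open>z \<in> \<Gamma> t'\<close> \<open>t' \<in> T\<close> by blast+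
    then have "z \<in> mball x r" using triangle[of x y z] xy yz n by simp
    then show "\<exists>z\<in>\<Union>t\<in>T. \<Gamma> t. z \<in> mball x r" using \<open>z \<in> \<Gamma> t'\<close> \<open>t' \<in> T\<close> by blast
  qed
  moreover have "countable D" using \<open>countable T\<close> Dt T_sub by (auto simp: D_def)
  moreover have "D \<subseteq> (\<Union>t\<in>I. \<Gamma> t)" using Dt T_sub unfolding D_def by blast
  ultimately show ?thesis using closure_T by blast
qed

end

lemma SUP_INF_less_imp_ex_less:
  fixes f :: "'a \<Rightarrow> 'b \<Rightarrow> real"
  assumes bounded: "\<And>a b. \<bar>f a b\<bar> \<le> C" and "B \<noteq> {}" and "a \<in> A"
    and less: "(SUP a\<in>A. INF b\<in>B. f a b) < e"
  shows "\<exists>b\<in>B. f a b < e"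
proof -
  obtain b0 where "b0 \<in> B" using \<open>B \<noteq> {}\<close> by blast
  have bdd: "bdd_below (f a' ` B)" for a'
  proof (rule bdd_belowI2)
    show "- C \<le> f a' b" for b using bounded[of a' b] by linarith
  qed
  have "(INF b\<in>B. f a' b) \<le> C" for a'
    using cINF_lower[OF bdd[of a'] \<open>b0 \<in> B\<close>] bounded[of a' b0] by linarith
  then have "bdd_above ((\<lambda>a. INF b\<in>B. f a b) ` A)" by (intro bdd_aboveI2)
  then have "(INF b\<in>B. f a b) < e"
    using cSUP_upper[OF \<open>a \<in> A\<close>] less by fastforce
  then show ?thesis using cINF_less_iff[OF \<open>B \<noteq> {}\<close> bdd] by blast
qed

lemma AE_imp_null_exceptional_subset:
  assumes "AE x\<in>S in M. P x" and "S \<in> sets M"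
  shows "\<exists>N. N \<subseteq> S \<and> N \<in> null_sets M \<and> (\<forall>x\<in>S - N. P x)"
proof -
  obtain N0 where N0: "{x \<in> space M. \<not> (x \<in> S \<longrightarrow> P x)} \<subseteq> N0" "N0 \<in> null_sets M"
    using assms(1) unfolding eventually_ae_filter by blast
  have "S \<subseteq> space M" using sets.sets_into_space[OF assms(2)] .
  then show ?thesis
    using N0 null_set_Int1[OF N0(2) assms(2)] by (intro exI[of _ "S \<inter> N0"]) auto
qed

lemma seminorm_0: "is_seminorm q \<Longrightarrow> q 0 = 0"
  unfolding is_seminorm_def by (metis abs_zero mult_zero_left scaleR_zero_left)

lemma seminorm_minus: "is_seminorm q \<Longrightarrow> q (- x) = q x"
  unfolding is_seminorm_def by (metis abs_minus_cancel abs_one mult_1 scaleR_minus1_left)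

lemma seminorm_minus_commute: "is_seminorm q \<Longrightarrow> q (x - y) = q (y - x)"
  by (metis minus_diff_eq seminorm_minus)

lemma seminorm_nonneg:
  assumes "is_seminorm q" shows "0 \<le> q x"
proof -
  have "q 0 \<le> q x + q (- x)"
    using assms unfolding is_seminorm_def by (metis add.right_inverse)
  then show ?thesis using assms by (simp add: seminorm_0 seminorm_minus)
qed

lemma seminorm_diff_triangle: "is_seminorm q \<Longrightarrow> q (x - z) \<le> q (x - y) + q (y - z)"
  unfolding is_seminorm_def by (metis diff_add_cancel add_diff_eq)

lemma frac_one_plus_mono:
  fixes u v :: real
  assumes "0 \<le> u" "u \<le> v" shows "u / (1 + u) \<le> v / (1 + v)"
  using assms by (simp add: divide_simps algebra_simps)

lemma frac_one_plus_bounds: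
  fixes u :: real
  assumes "0 \<le> u" shows "0 \<le> u / (1 + u)" "u / (1 + u) \<le> 1" "u / (1 + u) \<le> u"
  using assms by (auto simp: divide_simps algebra_simps)

lemma frac_one_plus_subadditive:
  fixes u v :: real
  assumes "0 \<le> u" "0 \<le> v"
  shows "(u + v) / (1 + (u + v)) \<le> u / (1 + u) + v / (1 + v)"
proof -
  have "u / (1 + (u + v)) \<le> u / (1 + u)" "v / (1 + (u + v)) \<le> v / (1 + v)"
    using assms by (auto intro!: divide_left_mono)
  then show ?thesis by (simp add: add_divide_distrib)
qed

locale seminorm_family =
  fixes p :: "nat \<Rightarrow> 'a::real_vector \<Rightarrow> real"
  assumes seminorm: "is_seminorm (p i)"
begin

lemma seminorm_family_nonneg: "0 \<le> p i x"
  by (rule seminorm_nonneg[OF seminorm])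

abbreviation fdist_term :: "nat \<Rightarrow> 'a \<Rightarrow> real" where
  "fdist_term i v \<equiv> (1/2) ^ Suc i * (p i v / (1 + p i v))"

lemma fdist_term_nonneg: "0 \<le> fdist_term i v"
  by (intro mult_nonneg_nonneg frac_one_plus_bounds seminorm_family_nonneg) simp

lemma fdist_term_le: "fdist_term i v \<le> (1/2) ^ Suc i"
  by (intro mult_left_le frac_one_plus_bounds seminorm_family_nonneg) simp

lemma summable_fdist_term: "summable (\<lambda>i. fdist_term i v)"
proof (rule summable_comparison_test)
  show "\<exists>N. \<forall>i\<ge>N. norm (fdist_term i v) \<le> (1/2) ^ Suc i"
    by (simp only: real_norm_def abs_of_nonneg[OF fdist_term_nonneg] fdist_term_le) blast
qed (rule sums_summable[OF power_half_series])

lemma fdist_nonneg: "0 \<le> fdist p x y"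
  unfolding fdist_def by (intro suminf_nonneg summable_fdist_term fdist_term_nonneg)

lemma fdist_le_1: "fdist p x y \<le> 1"
proof -
  have "fdist p x y \<le> (\<Sum>i. (1/2::real) ^ Suc i)"
    unfolding fdist_def
    by (intro suminf_le summable_fdist_term fdist_term_le) (rule sums_summable[OF power_half_series])
  then show ?thesis using power_half_series sums_unique by fastforce
qed

lemma fdist_self: "fdist p x x = 0"
  unfolding fdist_def by (simp add: seminorm_0[OF seminorm])

lemma fdist_commute: "fdist p x y = fdist p y x"
  unfolding fdist_def by (simp add: seminorm_minus_commute[OF seminorm])

lemma fdist_triangle: "fdist p x z \<le> fdist p x y + fdist p y z"
proof -
  have "fdist_term i (x - z) \<le> fdist_term i (x - y) + fdist_term i (y - z)" for i
  proof -
    let ?a = "p i (x - y)" and ?b = "p i (y - z)"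
    have a: "0 \<le> ?a" and b: "0 \<le> ?b" using seminorm_family_nonneg by auto
    have "p i (x - z) / (1 + p i (x - z)) \<le> (?a + ?b) / (1 + (?a + ?b))"
      by (intro frac_one_plus_mono seminorm_family_nonneg seminorm_diff_triangle seminorm)
    also have "\<dots> \<le> ?a / (1 + ?a) + ?b / (1 + ?b)"
      by (rule frac_one_plus_subadditive[OF a b])
    finally show ?thesis
      by (simp only: distrib_left[symmetric]) (rule mult_left_mono, simp_all)
  qed
  then have "fdist p x z \<le> (\<Sum>i. fdist_term i (x - y) + fdist_term i (y - z))"
    unfolding fdist_def by (intro suminf_le summable_add summable_fdist_term)
  also have "\<dots> = fdist p x y + fdist p y z"
    unfolding fdist_def by (intro suminf_add[symmetric] summable_fdist_term)
  finally show ?thesis .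
qed

lemma fdist_term_le_fdist: "fdist_term i (x - y) \<le> fdist p x y"
proof -
  have "(\<Sum>j\<in>{i}. fdist_term j (x - y)) \<le> fdist p x y"
    unfolding fdist_def by (intro sum_le_suminf summable_fdist_term fdist_term_nonneg) auto
  then show ?thesis by simp
qed

lemma fdist_small_imp_seminorm_small:
  assumes "0 < \<epsilon>"
  shows "\<exists>\<delta>>0. \<forall>x y. fdist p x y < \<delta> \<longrightarrow> p i (x - y) < \<epsilon>"
proof (intro exI conjI allI impI)
  show "0 < (1/2::real) ^ Suc i * (\<epsilon> / (1 + \<epsilon>))" using assms by simp
  fix x y
  assume "fdist p x y < (1/2) ^ Suc i * (\<epsilon> / (1 + \<epsilon>))"
  then have "fdist_term i (x - y) < (1/2) ^ Suc i * (\<epsilon> / (1 + \<epsilon>))"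
    using fdist_term_le_fdist by (rule le_less_trans[rotated])
  then have "p i (x - y) / (1 + p i (x - y)) < \<epsilon> / (1 + \<epsilon>)"
    by (rule mult_left_less_imp_less) simp
  then show "p i (x - y) < \<epsilon>"
    using frac_one_plus_mono[OF less_imp_le[OF assms]] by (meson not_less)
qed

lemma fdist_eq_0_imp_seminorms_vanish:
  assumes "fdist p x y = 0" shows "p i (x - y) = 0"
proof -
  have "fdist_term i (x - y) = 0"
    using fdist_term_le_fdist[of i x y] fdist_term_nonneg[of i "x - y"] assms by linarith
  then show ?thesis using seminorm_family_nonneg[of i "x - y"] by (simp add: divide_simps)
qed

lemma fhaus_less_imp_close:
  assumes "fhaus p A B < e" "A \<noteq> {}" "B \<noteq> {}"
  shows "\<forall>a\<in>A. \<exists>b\<in>B. fdist p a b < e" "\<forall>b\<in>B. \<exists>a\<in>A. fdist p b a < e"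
proof -
  have bounded: "\<bar>fdist p x y\<bar> \<le> 1" for x y
    using fdist_nonneg fdist_le_1 by simp
  have "(SUP a\<in>A. INF b\<in>B. fdist p a b) < e" "(SUP b\<in>B. INF a\<in>A. fdist p a b) < e"
    using assms(1) unfolding fhaus_def by simp_all
  then show "\<forall>a\<in>A. \<exists>b\<in>B. fdist p a b < e" "\<forall>b\<in>B. \<exists>a\<in>A. fdist p b a < e"
    using SUP_INF_less_imp_ex_less[of "fdist p" 1 B _ A e]
      SUP_INF_less_imp_ex_less[of "\<lambda>b a. fdist p a b" 1 A _ B e] bounded assms(2,3)
    by (auto simp: fdist_commute)
qed

lemma fhaus_tendsto_0_imp_close:
  assumes "(\<lambda>n. fhaus p (G n) A) \<longlonglongrightarrow> 0" "\<And>n. G n \<noteq> {}" "A \<noteq> {}" "0 < e"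
  shows "\<exists>n. (\<forall>x\<in>A. \<exists>y\<in>G n. fdist p x y < e) \<and> (\<forall>y\<in>G n. \<exists>z\<in>A. fdist p y z < e)"
proof -
  obtain n where "fhaus p (G n) A < e"
    using order_tendstoD(2)[OF assms(1) assms(4)] by (auto simp: eventually_sequentially)
  then have "\<forall>y\<in>G n. \<exists>z\<in>A. fdist p y z < e" "\<forall>x\<in>A. \<exists>y\<in>G n. fdist p x y < e"
    using assms(2,3) by (rule fhaus_less_imp_close)+
  then show ?thesis by blast
qed

end

locale frechet_seminorm_family = seminorm_family +
  assumes seminorm_mono: "p i x \<le> p (Suc i) x"
    and seminorms_separating: "(\<And>i. p i x = 0) \<Longrightarrow> x = 0"
begin

lemma fdist_le_seminorm: "fdist p x y \<le> p K (x - y) + (1/2) ^ K"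
proof -
  let ?v = "x - y"
  define tail where "tail j = (if K \<le> j then (1/2::real) ^ Suc j else 0)" for j
  have "(\<lambda>j. tail (j + K)) = (\<lambda>j. (1/2) ^ K * (1/2::real) ^ Suc j)"
    by (auto simp: tail_def power_add)
  then have "(\<lambda>j. tail (j + K)) sums ((1/2) ^ K)"
    using sums_mult[OF power_half_series, of "(1/2) ^ K"] by simp
  then have "tail sums ((1/2) ^ K)"
    using sums_iff_shift[of tail K] by (simp add: tail_def)
  then have bound: "(\<lambda>j. (1/2::real) ^ Suc j * p K ?v + tail j) sums (p K ?v + (1/2) ^ K)"
    using sums_add[OF sums_mult2[OF power_half_series]] by fastforce
  have "fdist_term j ?v \<le> (1/2) ^ Suc j * p K ?v + tail j" for j
  proof (cases "K \<le> j")
    case True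
    then have "tail j = (1/2) ^ Suc j" by (simp add: tail_def)
    moreover have "0 \<le> (1/2::real) ^ Suc j * p K ?v" using seminorm_family_nonneg by simp
    ultimately show ?thesis using fdist_term_le[of j ?v] by linarith
  next
    case False
    then have "p j ?v \<le> p K ?v"
      using lift_Suc_mono_le[of "\<lambda>i. p i ?v" j K] seminorm_mono by simp
    then have "p j ?v / (1 + p j ?v) \<le> p K ?v"
      using frac_one_plus_bounds(3)[OF seminorm_family_nonneg] order_trans by blast
    then have "fdist_term j ?v \<le> (1/2) ^ Suc j * p K ?v"
      by (rule mult_left_mono) simp
    then show ?thesis using False by (simp add: tail_def)
  qed
  then have "fdist p x y \<le> (\<Sum>j. (1/2::real) ^ Suc j * p K ?v + tail j)"
    unfolding fdist_def using bound by (intro suminf_le summable_fdist_term) (auto dest: sums_summable)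
  then show ?thesis using bound sums_unique by fastforce
qed

lemma seminorm_small_imp_fdist_small:
  assumes "0 < r"
  shows "\<exists>i \<epsilon>. 0 < \<epsilon> \<and> (\<forall>x y. p i (x - y) < \<epsilon> \<longrightarrow> fdist p x y < r)"
proof -
  obtain K where K: "(1/2::real) ^ K < r / 2"
    using real_arch_pow_inv[of "r / 2" "1/2"] assms by auto
  have "fdist p x y < r" if "p K (x - y) < r / 2" for x y
    using fdist_le_seminorm[of x y K] that K by linarith
  then show ?thesis using assms by (intro exI[of _ K] exI[of _ "r / 2"]) auto
qed

text \<open>The mandatory prefix avoids a clash with the function-space distance \<open>Metric_space.fdist\<close>.\<close>
sublocale fmetric: Metric_space UNIV "fdist p"
proof
  fix x y z :: 'a
  show "0 \<le> fdist p x y" "fdist p x y = fdist p y x" "fdist p x z \<le> fdist p x y + fdist p y z"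
    by (rule fdist_nonneg fdist_commute fdist_triangle)+
  show "fdist p x y = 0 \<longleftrightarrow> x = y"
    using fdist_eq_0_imp_seminorms_vanish[THEN seminorms_separating] fdist_self by auto
qed

lemma fr_topology_eq_mtopology: "fr_topology p = fmetric.mtopology"
proof -
  have "(\<forall>x\<in>U. \<exists>i \<epsilon>. \<epsilon> > 0 \<and> {y. p i (y - x) < \<epsilon>} \<subseteq> U) \<longleftrightarrow> openin fmetric.mtopology U" for U
  proof
    assume U: "\<forall>x\<in>U. \<exists>i \<epsilon>. \<epsilon> > 0 \<and> {y. p i (y - x) < \<epsilon>} \<subseteq> U"
    have "\<exists>\<delta>>0. fmetric.mball x \<delta> \<subseteq> U" if "x \<in> U" for x
    proof -
      obtain i \<epsilon> where "0 < \<epsilon>" and ball: "{y. p i (y - x) < \<epsilon>} \<subseteq> U"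
        using U \<open>x \<in> U\<close> by blast
      then obtain \<delta> where "0 < \<delta>" and small: "\<And>y. fdist p y x < \<delta> \<Longrightarrow> p i (y - x) < \<epsilon>"
        using fdist_small_imp_seminorm_small by blast
      have "fmetric.mball x \<delta> \<subseteq> U"
      proof
        fix y assume "y \<in> fmetric.mball x \<delta>"
        then have "fdist p y x < \<delta>" using fdist_commute[of x y] by simp
        then show "y \<in> U" using small ball by blast
      qed
      then show ?thesis using \<open>0 < \<delta>\<close> by blast
    qed
    then show "openin fmetric.mtopology U" by (simp add: fmetric.openin_mtopology)
  next
    assume "openin fmetric.mtopology U"
    then have U: "\<forall>x\<in>U. \<exists>r>0. fmetric.mball x r \<subseteq> U" by (simp add: fmetric.openin_mtopology)
    show "\<forall>x\<in>U. \<exists>i \<epsilon>. \<epsilon> > 0 \<and> {y. p i (y - x) < \<epsilon>} \<subseteq> U"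
    proof
      fix x assume "x \<in> U"
      then obtain r where "0 < r" and ball: "fmetric.mball x r \<subseteq> U" using U by blast
      then obtain i \<epsilon> where "0 < \<epsilon>" and small: "\<And>y. p i (y - x) < \<epsilon> \<Longrightarrow> fdist p y x < r"
        using seminorm_small_imp_fdist_small by blast
      have "{y. p i (y - x) < \<epsilon>} \<subseteq> U"
      proof
        fix y assume "y \<in> {y. p i (y - x) < \<epsilon>}"
        then have "fdist p y x < r" using small by simp
        then have "fdist p x y < r" using fdist_commute[of x y] by linarith
        then show "y \<in> U" using ball by (auto simp: fmetric.mball_def)
      qed
      then show "\<exists>i \<epsilon>. \<epsilon> > 0 \<and> {y. p i (y - x) < \<epsilon>} \<subseteq> U" using \<open>0 < \<epsilon>\<close> by blast
    qed
  qed
  then have "(\<lambda>U. \<forall>x\<in>U. \<exists>i \<epsilon>. \<epsilon> > 0 \<and> {y. p i (y - x) < \<epsilon>} \<subseteq> U) = openin fmetric.mtopology"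
    by (intro ext)
  then show ?thesis
    unfolding fr_topology_def by (simp add: openin_inverse)
qed

lemma compactin_imp_fr_separable:
  assumes "compactin (fr_topology p) C" shows "fr_separable p C"
proof -
  have "fmetric.mtotally_bounded C"
    using assms fmetric.compactin_imp_mtotally_bounded by (simp add: fr_topology_eq_mtopology)
  then show ?thesis unfolding fr_separable_def fr_topology_eq_mtopology
    by (rule fmetric.mtotally_bounded_imp_countable_dense)
qed

end

lemma simple_multifunction_finitely_valued:
  assumes "simple_multifunction p G"
  shows "finite (G ` {0..1})" "{} \<notin> G ` {0..1}"
proof -
  obtain m :: nat and A C where AC: "\<forall>j<m. A j \<in> sets lebesgue \<and> C j \<in> cb p"
    "\<forall>j<m. \<forall>k<m. j \<noteq> k \<longrightarrow> A j \<inter> A k = {}"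
    "\<forall>t\<in>{0..1}. G t = (if \<exists>j<m. t \<in> A j then C (THE j. j < m \<and> t \<in> A j) else {0})"
    using assms unfolding simple_multifunction_def by blast
  have "G t \<in> insert {0} (C ` {..<m})" if "t \<in> {0..1}" for t
  proof -
    have Gt: "G t = (if \<exists>j<m. t \<in> A j then C (THE j. j < m \<and> t \<in> A j) else {0})"
      using AC(3) that by blast
    show ?thesis
    proof (cases "\<exists>j<m. t \<in> A j")
      case True
      then obtain j where j: "j < m" "t \<in> A j" by blast
      have "(THE j. j < m \<and> t \<in> A j) = j"
        using AC(2) j by (intro the_equality) blast+
      then show ?thesis using Gt True j(1) by simp
    next
      case False
      then show ?thesis using Gt by (subst (asm) if_not_P[OF False]) simp
    qed
  qed
  then have G_range: "G ` {0..1} \<subseteq> insert {0} (C ` {..<m})" by blast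
  then show "finite (G ` {0..1})" by (rule finite_subset) simp
  have "{} \<notin> C ` {..<m}" using AC(1) by (auto simp: cb_def)
  then show "{} \<notin> G ` {0..1}" using G_range by blast
qed

theorem theorem3p6:
  fixes p :: "nat \<Rightarrow> 'a::real_vector \<Rightarrow> real"
    and \<Gamma> :: "real \<Rightarrow> 'a set"
  assumes "frechet_seminorms p"
    and "\<forall>t\<in>{0..1}. \<Gamma> t \<in> ck p"
    and "bochner_measurable_mf p \<Gamma>"
  shows "\<exists>N. N \<subseteq> {0..1} \<and> N \<in> null_sets lebesgue \<and>
           fr_separable p (\<Union>t\<in>{0..1} - N. \<Gamma> t)"
proof -
  interpret frechet_seminorm_family p
    using assms(1) unfolding frechet_seminorms_def by unfold_locales blast+
  obtain G where G: "\<And>n. simple_multifunction p (G n)"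
    and AE: "AE t\<in>{0..1} in lebesgue. (\<lambda>n. fhaus p (G n t) (\<Gamma> t)) \<longlonglongrightarrow> 0"
    using assms(3) unfolding bochner_measurable_mf_def by blast
  obtain N where "N \<subseteq> {0..1}" "N \<in> null_sets lebesgue"
    and conv: "\<And>t. t \<in> {0..1} - N \<Longrightarrow> (\<lambda>n. fhaus p (G n t) (\<Gamma> t)) \<longlonglongrightarrow> 0"
    using AE_imp_null_exceptional_subset[OF AE] by auto
  have \<Gamma>: "\<Gamma> t \<noteq> {}" "fr_separable p (\<Gamma> t)" if "t \<in> {0..1}" for t
    using assms(2) that compactin_imp_fr_separable by (auto simp: ck_def)
  have G_ne: "G n t \<noteq> {}" if "t \<in> {0..1}" for n t
    using simple_multifunction_finitely_valued(2)[OF G, of n] that by force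
  have "\<exists>S\<in>(\<Union>n. G n ` {0..1}). (\<forall>x\<in>\<Gamma> t. \<exists>y\<in>S. fdist p x y < e) \<and> (\<forall>y\<in>S. \<exists>z\<in>\<Gamma> t. fdist p y z < e)"
    if t: "t \<in> {0..1} - N" and "0 < e" for t e
    using fhaus_tendsto_0_imp_close[OF conv[OF t] G_ne \<Gamma>(1) \<open>0 < e\<close>] t by blast
  moreover have "countable (\<Union>n. G n ` {0..1})"
    using simple_multifunction_finitely_valued(1)[OF G] by (simp add: countable_finite)
  moreover have "\<exists>D. countable D \<and> D \<subseteq> \<Gamma> t \<and> \<Gamma> t \<subseteq> fmetric.mtopology closure_of D"
    if "t \<in> {0..1} - N" for t
    using \<Gamma>(2)[of t] that unfolding fr_separable_def fr_topology_eq_mtopology by blast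
  ultimately have "fr_separable p (\<Union>t\<in>{0..1} - N. \<Gamma> t)"
    unfolding fr_separable_def fr_topology_eq_mtopology
    by (intro fmetric.countable_dense_Union_of_approximable) auto
  with \<open>N \<subseteq> {0..1}\<close> \<open>N \<in> null_sets lebesgue\<close> show ?thesis by blast
qed

end
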